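(* Assume the standing setting, let $\epsilon>0$, fix a coarse index $j$ and an integer $m$ with $r/2\le m\le r$. If $|u^0_i-u^0_{i+1}|\le \epsilon/3^{M}$ for all $i\in\mathbb Z$, then $|u^M_{jr+m}-u^M_{(j+1)r}|\le (r-m)\epsilon$.
   Context: Standing setting. Let $F:\mathbb R\to\mathbb R$ be continuously differentiable. For a spatial step $\eta>0$, a time step $\tau>0$ and an initial sequence $(z^0_i)_{i\in\mathbb Z}$ of reals, the EFC (Euler forward in time, centered in space) scheme produces $(z^n_i)_{i\in\mathbb Z,\,n\in\mathbb N}$ by $z^{n+1}_i=z^n_i-F'(z^n_i)\frac{\tau}{2\eta}\,(z^n_{i+1}-z^n_{i-1})$. It satisfies the CFL condition if $|F'(z^n_i)|\,\tau/\eta\le 1$ for all $i\in\mathbb Z$, $n\in\mathbb N$. Fix $a\in\mathbb R$, $h>0$, $\Delta t>0$, an integer $N>1$ and an even integer $r\ge 2$; put $k=h/r$, $dt=\Delta t/r$, $M=Nr$. Let $u_0:\mathbb R\to\mathbb R$. The coarse solution $(w^n_j)$ is the EFC scheme with $\eta=h$, $\tau=\Delta t$, $w^0_j=u_0(a+jh)$; the fine solution $(u^n_i)$ is the EFC scheme with $\eta=k$, $\tau=dt$, $u^0_i=u_0(a+ik)$ (so $w^0_j=u^0_{jr}$). Both are assumed to satisfy the CFL condition. *)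

theory Defs
  imports Complex_Main
begin

text \<open>EFC scheme (Euler forward in time, centered in space).
  F' is the derivative of the flux F; eta spatial step, tau time step, z0 initial data.\<close>
fun efc :: "(real \<Rightarrow> real) \<Rightarrow> real \<Rightarrow> real \<Rightarrow> (int \<Rightarrow> real) \<Rightarrow> nat \<Rightarrow> int \<Rightarrow> real" where
  "efc F' eta tau z0 0 i = z0 i"
| "efc F' eta tau z0 (Suc n) i =
     efc F' eta tau z0 n i
     - F' (efc F' eta tau z0 n i) * (tau / (2 * eta))
       * (efc F' eta tau z0 n (i + 1) - efc F' eta tau z0 n (i - 1))"

definition cfl :: "(real \<Rightarrow> real) \<Rightarrow> real \<Rightarrow> real \<Rightarrow> (int \<Rightarrow> real) \<Rightarrow> bool" where
  "cfl F' eta tau z0 \<longleftrightarrow>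
     (\<forall>n i. \<bar>F' (efc F' eta tau z0 n i)\<bar> * tau / eta \<le> 1)"

end

theory Submission
  imports Defs
begin

text \<open>Under the CFL condition every coefficient \<open>F'(z) \<tau>/(2\<eta>)\<close> of the scheme has modulus at
  most 1/2, so one step of the scheme at most triples the differences of neighbouring values.
  After \<open>M\<close> fine steps the neighbouring differences are therefore at most \<open>\<epsilon>\<close>, and the
  difference between the fine cells \<open>jr + m\<close> and \<open>(j+1)r\<close> telescopes over \<open>r - m\<close> of them.\<close>

lemma abs_centered_step_diff_le:
  fixes c1 c2 a0 a1 a2 a3 D :: real
  assumes "\<bar>c1\<bar> \<le> 1/2" "\<bar>c2\<bar> \<le> 1/2"
    and "\<bar>a1 - a0\<bar> \<le> D" "\<bar>a2 - a1\<bar> \<le> D" "\<bar>a3 - a2\<bar> \<le> D"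
  shows "\<bar>(a2 - c2 * (a3 - a1)) - (a1 - c1 * (a2 - a0))\<bar> \<le> 3 * D"
proof -
  have "\<bar>c2 * (a3 - a1)\<bar> \<le> 1/2 * (2 * D)"
    unfolding abs_mult using assms by (intro mult_mono) auto
  moreover have "\<bar>c1 * (a2 - a0)\<bar> \<le> 1/2 * (2 * D)"
    unfolding abs_mult using assms by (intro mult_mono) auto
  ultimately show ?thesis
    using assms(4) by (simp add: abs_le_iff)
qed

lemma cfl_coefficient_le_half:
  assumes "eta > 0" "tau > 0" "cfl F' eta tau z0"
  shows "\<bar>F' (efc F' eta tau z0 n i) * (tau / (2 * eta))\<bar> \<le> 1/2"
proof -
  have "\<bar>F' (efc F' eta tau z0 n i)\<bar> * tau / eta \<le> 1"
    using assms(3) unfolding cfl_def by blast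
  moreover have "\<bar>F' (efc F' eta tau z0 n i) * (tau / (2 * eta))\<bar>
      = (\<bar>F' (efc F' eta tau z0 n i)\<bar> * tau / eta) / 2"
    using assms(1,2) by (simp add: abs_mult)
  ultimately show ?thesis by simp
qed

lemma efc_neighbour_diff_le:
  assumes "eta > 0" "tau > 0" "cfl F' eta tau z0"
    and initial: "\<And>i. \<bar>z0 (i + 1) - z0 i\<bar> \<le> B"
  shows "\<bar>efc F' eta tau z0 n (i + 1) - efc F' eta tau z0 n i\<bar> \<le> 3 ^ n * B"
proof (induction n arbitrary: i)
  case 0
  then show ?case using initial by simp
next
  case (Suc n)
  let ?z = "efc F' eta tau z0 n"
  have left: "\<bar>?z i - ?z (i - 1)\<bar> \<le> 3 ^ n * B"
    using Suc.IH[of "i - 1"] by simp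
  have right: "\<bar>?z (i + 1 + 1) - ?z (i + 1)\<bar> \<le> 3 ^ n * B"
    using Suc.IH[of "i + 1"] by simp
  show ?case
    using abs_centered_step_diff_le[OF cfl_coefficient_le_half[OF assms(1-3), of n i]
        cfl_coefficient_le_half[OF assms(1-3), of n "i + 1"] left Suc.IH[of i] right]
    by (simp add: algebra_simps)
qed

lemma abs_diff_le_of_unit_increments:
  fixes f :: "int \<Rightarrow> real"
  assumes "\<And>i. \<bar>f (i + 1) - f i\<bar> \<le> e"
  shows "\<bar>f (p + int k) - f p\<bar> \<le> real k * e"
proof (induction k)
  case 0
  then show ?case by simp
next
  case (Suc k)
  have "\<bar>f (p + int k + 1) - f (p + int k)\<bar> \<le> e"
    using assms by blast
  with Suc show ?case
    by (simp add: algebra_simps abs_le_iff)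
qed

theorem proposition10:
  fixes F F' :: "real \<Rightarrow> real" and u0 :: "real \<Rightarrow> real"
    and a h \<Delta>t \<epsilon> :: real and N r m :: nat and j :: int
  assumes F_deriv: "\<And>x. (F has_real_derivative F' x) (at x)"
    and F'_cont: "continuous_on UNIV F'"
    and h_pos: "h > 0" and dt_pos: "\<Delta>t > 0"
    and N_gt: "N > 1"
    and r_even: "even r" and r_ge: "r \<ge> 2"
    and cfl_coarse: "cfl F' h \<Delta>t (\<lambda>j. u0 (a + real_of_int j * h))"
    and cfl_fine: "cfl F' (h / real r) (\<Delta>t / real r) (\<lambda>i. u0 (a + real_of_int i * (h / real r)))"
    and eps_pos: "\<epsilon> > 0"
    and m_low: "real r / 2 \<le> real m" and m_up: "m \<le> r"
    and small: "\<And>i::int. \<bar>u0 (a + real_of_int i * (h / real r)) - u0 (a + real_of_int (i + 1) * (h / real r))\<bar>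
                   \<le> \<epsilon> / 3 ^ (N * r)"
  shows "\<bar>efc F' (h / real r) (\<Delta>t / real r) (\<lambda>i. u0 (a + real_of_int i * (h / real r))) (N * r) (j * int r + int m)
          - efc F' (h / real r) (\<Delta>t / real r) (\<lambda>i. u0 (a + real_of_int i * (h / real r))) (N * r) ((j + 1) * int r)\<bar>
         \<le> (real r - real m) * \<epsilon>"
proof -
  let ?u = "efc F' (h / real r) (\<Delta>t / real r) (\<lambda>i. u0 (a + real_of_int i * (h / real r))) (N * r)"
  have "real r > 0"
    using r_ge by simp
  then have "\<bar>?u (i + 1) - ?u i\<bar> \<le> 3 ^ (N * r) * (\<epsilon> / 3 ^ (N * r))" for i
    using h_pos dt_pos small
    by (intro efc_neighbour_diff_le[OF _ _ cfl_fine]) (auto simp: abs_minus_commute)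
  then have "\<bar>?u (j * int r + int m + int (r - m)) - ?u (j * int r + int m)\<bar> \<le> real (r - m) * \<epsilon>"
    by (intro abs_diff_le_of_unit_increments) simp
  moreover have "j * int r + int m + int (r - m) = (j + 1) * int r"
    using m_up by (simp add: algebra_simps)
  ultimately show ?thesis
    using m_up by (simp add: abs_minus_commute of_nat_diff)
qed

end
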